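(* Let $n\ge1$ and let $\mathcal V$ be a variety with $n+2$ Gumm terms. Then $\mathcal V$ satisfies $$\alpha(\beta\circ\gamma\circ\beta\circ\gamma\circ\beta)\subseteq(\alpha\beta\circ_{4n-1}\alpha\gamma)\circ\alpha(\gamma\circ\beta)\circ(\alpha\gamma\circ_{2n}\alpha\beta),$$ and consequently $\mathcal V$ satisfies $\alpha(\beta\circ\alpha\gamma\circ\beta\circ\alpha\gamma\circ\beta)\subseteq\alpha\beta\circ_{6n+1}\alpha\gamma$.
   Context: Here $\alpha,\beta,\gamma$ range over congruences of algebras in $\mathcal V$. $\circ$ is relational composition, juxtaposition is intersection. For relations $X,Y$ and $m\ge1$, $X\circ_m Y$ denotes $X\circ Y\circ X\circ\cdots$ with $m$ factors. A variety has $n+2$ Gumm terms if it has ternary terms $p,j_1,\dots,j_{n+1}$ satisfying: $x=j_i(x,y,x)$ for all $i$; $x=p(x,z,z)$; $p(x,x,z)=j_1(x,x,z)$; $j_i(x,z,z)=j_{i+1}(x,z,z)$ for odd $i\le n$; $j_i(x,x,z)=j_{i+1}(x,x,z)$ for even $i\le n$; $j_{n+1}(x,y,z)=z$. *)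

theory Defs
  imports Main
begin

datatype 'f trm = Var nat | Fun 'f "'f trm list"

fun wf_trm :: "('f \<Rightarrow> nat) \<Rightarrow> 'f trm \<Rightarrow> bool" where
  "wf_trm ar (Var i) = True"
| "wf_trm ar (Fun f ts) = (length ts = ar f \<and> (\<forall>t\<in>set ts. wf_trm ar t))"

fun vars_trm :: "'f trm \<Rightarrow> nat set" where
  "vars_trm (Var i) = {i}"
| "vars_trm (Fun f ts) = (\<Union>t\<in>set ts. vars_trm t)"

type_synonym ('a, 'f) alg = "'a set \<times> ('f \<Rightarrow> 'a list \<Rightarrow> 'a)"

definition carrier :: "('a, 'f) alg \<Rightarrow> 'a set" where
  "carrier A = fst A"

definition op :: "('a, 'f) alg \<Rightarrow> 'f \<Rightarrow> 'a list \<Rightarrow> 'a" where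
  "op A = snd A"

definition algebra :: "('f \<Rightarrow> nat) \<Rightarrow> ('a, 'f) alg \<Rightarrow> bool" where
  "algebra ar A \<longleftrightarrow>
     (\<forall>f xs. length xs = ar f \<longrightarrow> set xs \<subseteq> carrier A \<longrightarrow> op A f xs \<in> carrier A)"

fun eval :: "('a, 'f) alg \<Rightarrow> (nat \<Rightarrow> 'a) \<Rightarrow> 'f trm \<Rightarrow> 'a" where
  "eval A \<rho> (Var i) = \<rho> i"
| "eval A \<rho> (Fun f ts) = op A f (map (eval A \<rho>) ts)"

definition satisfies :: "('a, 'f) alg \<Rightarrow> 'f trm \<Rightarrow> 'f trm \<Rightarrow> bool" where
  "satisfies A s t \<longleftrightarrow> (\<forall>\<rho>. range \<rho> \<subseteq> carrier A \<longrightarrow> eval A \<rho> s = eval A \<rho> t)"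

text \<open>A variety (of algebras of signature ar, with carriers in the type 'a) is an
  equational class: the class of all algebras satisfying a set E of identities (Birkhoff).\<close>

definition variety :: "('f \<Rightarrow> nat) \<Rightarrow> ('a, 'f) alg set \<Rightarrow> bool" where
  "variety ar V \<longleftrightarrow>
     (\<exists>E :: ('f trm \<times> 'f trm) set.
        (\<forall>(s,t)\<in>E. wf_trm ar s \<and> wf_trm ar t) \<and>
        V = {A. algebra ar A \<and> (\<forall>(s,t)\<in>E. satisfies A s t)})"

definition tern :: "('a, 'f) alg \<Rightarrow> 'f trm \<Rightarrow> 'a \<Rightarrow> 'a \<Rightarrow> 'a \<Rightarrow> 'a" where
  "tern A t a b c = eval A (\<lambda>i. if i = 0 then a else if i = 1 then b else c) t"

definition ternary_trm :: "('f \<Rightarrow> nat) \<Rightarrow> 'f trm \<Rightarrow> bool" where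
  "ternary_trm ar t \<longleftrightarrow> wf_trm ar t \<and> vars_trm t \<subseteq> {0, 1, 2}"

definition has_gumm_terms :: "('f \<Rightarrow> nat) \<Rightarrow> ('a, 'f) alg set \<Rightarrow> nat \<Rightarrow> bool" where
  "has_gumm_terms ar V n \<longleftrightarrow>
    (\<exists>p (j :: nat \<Rightarrow> 'f trm).
       ternary_trm ar p \<and> (\<forall>i\<in>{1..n+1}. ternary_trm ar (j i)) \<and>
       (\<forall>A\<in>V. \<forall>x\<in>carrier A. \<forall>y\<in>carrier A. \<forall>z\<in>carrier A.
          (\<forall>i\<in>{1..n+1}. tern A (j i) x y x = x) \<and>
          tern A p x z z = x \<and>
          tern A p x x z = tern A (j 1) x x z \<and>
          (\<forall>i\<in>{1..n}. odd i \<longrightarrow> tern A (j i) x z z = tern A (j (i+1)) x z z) \<and>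
          (\<forall>i\<in>{1..n}. even i \<longrightarrow> tern A (j i) x x z = tern A (j (i+1)) x x z) \<and>
          tern A (j (n+1)) x y z = z))"

definition congruence :: "('f \<Rightarrow> nat) \<Rightarrow> ('a, 'f) alg \<Rightarrow> 'a rel \<Rightarrow> bool" where
  "congruence ar A \<theta> \<longleftrightarrow>
     equiv (carrier A) \<theta> \<and>
     (\<forall>f xs ys. length xs = ar f \<longrightarrow> length ys = ar f \<longrightarrow>
        set xs \<subseteq> carrier A \<longrightarrow> set ys \<subseteq> carrier A \<longrightarrow>
        list_all2 (\<lambda>a b. (a, b) \<in> \<theta>) xs ys \<longrightarrow> (op A f xs, op A f ys) \<in> \<theta>)"

fun alt_comp :: "'a rel \<Rightarrow> 'a rel \<Rightarrow> nat \<Rightarrow> 'a rel" where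
  "alt_comp X Y 0 = Id"
| "alt_comp X Y (Suc 0) = X"
| "alt_comp X Y (Suc (Suc k)) = X O alt_comp Y X (Suc k)"

end

theory Submission
  imports Defs
begin

text \<open>
  Let \<open>a \<alpha> f\<close> and \<open>a \<beta> b \<gamma> c \<beta> d \<gamma> e \<beta> f\<close>. Since \<open>j\<^sub>i(x, y, x) = x\<close>, every element
  \<open>j\<^sub>i(f, w, a)\<close> lies in the \<open>\<alpha>\<close>-class of \<open>f\<close>, so moving \<open>w\<close> along \<open>b \<gamma> c \<beta> d \<gamma> e\<close> inside
  one \<open>j\<^sub>i\<close> gives steps in \<open>\<alpha>\<gamma>\<close> and \<open>\<alpha>\<beta>\<close>; the Gumm identities let us pass from \<open>j\<^sub>i\<^sub>+\<^sub>1\<close> to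
  \<open>j\<^sub>i\<close> at whichever of \<open>b, e\<close> is \<open>\<beta>\<close>-related to the point \<open>a\<close> or \<open>f\<close> where they agree.
  This leads from \<open>a = j\<^sub>n\<^sub>+\<^sub>1(f, w, a)\<close> down to \<open>m = j\<^sub>1(f, c, a)\<close>. With \<open>u = j\<^sub>1(e, d, b)\<close>
  and \<open>v = p(e, d, c)\<close> we have \<open>m \<beta> u \<gamma> v \<beta> f\<close>, hence \<open>m \<gamma> p(m, u, v) \<beta> j\<^sub>1(m, u, f) = t\<close>,
  and the same argument in the \<open>\<alpha>\<close>-class of \<open>m\<close>, alternating \<open>u\<close> and \<open>v\<close>, leads from \<open>t\<close>
  up to \<open>j\<^sub>n\<^sub>+\<^sub>1(m, u, f) = f\<close>. If \<open>\<gamma>\<close> is replaced by \<open>\<alpha>\<gamma>\<close>, the middle step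
  \<open>\<alpha>(\<alpha>\<gamma> \<circ> \<beta>)\<close> collapses into \<open>\<alpha>\<gamma> \<circ> \<alpha>\<beta>\<close>, which gives the second inclusion.
\<close>

lemma alt_comp_odd: "alt_comp X Y (Suc (2 * k)) = X O (Y O X) ^^ k"
proof (induction k arbitrary: X Y)
  case 0
  show ?case by simp
next
  case (Suc k)
  have "alt_comp X Y (Suc (2 * Suc k)) = X O Y O alt_comp X Y (Suc (2 * k))"
    by (simp add: O_assoc)
  also have "\<dots> = X O (Y O X) ^^ Suc k"
    by (simp add: Suc.IH relpow_commute[symmetric] O_assoc)
  finally show ?case .
qed

lemma alt_comp_even: "alt_comp X Y (2 * k) = (X O Y) ^^ k"
proof (cases k)
  case (Suc k')
  then have "alt_comp X Y (2 * k) = X O Y O (X O Y) ^^ k'"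
    by (simp add: alt_comp_odd O_assoc)
  then show ?thesis
    using Suc by (simp add: relpow_commute[symmetric] O_assoc)
qed simp

lemma Int_relcomp_absorb:
  assumes "sym \<alpha>" and "trans \<alpha>"
  shows "\<alpha> \<inter> ((\<alpha> \<inter> \<gamma>) O \<beta>) \<subseteq> (\<alpha> \<inter> \<gamma>) O (\<alpha> \<inter> \<beta>)"
  using assms by (blast dest: symD transD)

locale gumm_terms =
  fixes C :: "'a set" and p :: "'a \<Rightarrow> 'a \<Rightarrow> 'a \<Rightarrow> 'a"
    and j :: "nat \<Rightarrow> 'a \<Rightarrow> 'a \<Rightarrow> 'a \<Rightarrow> 'a" and n :: nat
  assumes j_xyx: "\<lbrakk>i \<in> {1..n+1}; x \<in> C; y \<in> C\<rbrakk> \<Longrightarrow> j i x y x = x"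
    and p_xzz: "\<lbrakk>x \<in> C; z \<in> C\<rbrakk> \<Longrightarrow> p x z z = x"
    and p_xxz: "\<lbrakk>x \<in> C; z \<in> C\<rbrakk> \<Longrightarrow> p x x z = j 1 x x z"
    and j_odd: "\<lbrakk>i \<in> {1..n}; odd i; x \<in> C; z \<in> C\<rbrakk> \<Longrightarrow> j i x z z = j (Suc i) x z z"
    and j_even: "\<lbrakk>i \<in> {1..n}; even i; x \<in> C; z \<in> C\<rbrakk> \<Longrightarrow> j i x x z = j (Suc i) x x z"
    and j_last: "\<lbrakk>x \<in> C; y \<in> C; z \<in> C\<rbrakk> \<Longrightarrow> j (Suc n) x y z = z"
begin

definition compatible :: "'a rel \<Rightarrow> bool" where
  "compatible \<theta> \<longleftrightarrow> equiv C \<theta> \<and>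
     (\<forall>x x' y y' z z'. (x, x') \<in> \<theta> \<longrightarrow> (y, y') \<in> \<theta> \<longrightarrow> (z, z') \<in> \<theta> \<longrightarrow>
        (p x y z, p x' y' z') \<in> \<theta> \<and> (\<forall>i \<in> {1..n+1}. (j i x y z, j i x' y' z') \<in> \<theta>))"

lemma compatible_field: "\<lbrakk>compatible \<theta>; (x, y) \<in> \<theta>\<rbrakk> \<Longrightarrow> x \<in> C \<and> y \<in> C"
  unfolding compatible_def equiv_def by blast

lemma compatible_refl: "\<lbrakk>compatible \<theta>; x \<in> C\<rbrakk> \<Longrightarrow> (x, x) \<in> \<theta>"
  unfolding compatible_def equiv_def by (blast dest: refl_onD)

lemma compatible_sym: "\<lbrakk>compatible \<theta>; (x, y) \<in> \<theta>\<rbrakk> \<Longrightarrow> (y, x) \<in> \<theta>"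
  unfolding compatible_def equiv_def by (blast dest: symD)

lemma compatible_trans: "\<lbrakk>compatible \<theta>; (x, y) \<in> \<theta>; (y, z) \<in> \<theta>\<rbrakk> \<Longrightarrow> (x, z) \<in> \<theta>"
  unfolding compatible_def equiv_def by (blast dest: transD)

lemma compatible_p:
  "\<lbrakk>compatible \<theta>; (x, x') \<in> \<theta>; (y, y') \<in> \<theta>; (z, z') \<in> \<theta>\<rbrakk> \<Longrightarrow> (p x y z, p x' y' z') \<in> \<theta>"
  unfolding compatible_def by blast

lemma compatible_j:
  "\<lbrakk>compatible \<theta>; i \<in> {1..n+1}; (x, x') \<in> \<theta>; (y, y') \<in> \<theta>; (z, z') \<in> \<theta>\<rbrakk>
    \<Longrightarrow> (j i x y z, j i x' y' z') \<in> \<theta>"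
  unfolding compatible_def by blast

lemma compatible_Int: "\<lbrakk>compatible \<alpha>; compatible \<gamma>\<rbrakk> \<Longrightarrow> compatible (\<alpha> \<inter> \<gamma>)"
  unfolding compatible_def equiv_def refl_on_def by (auto intro: sym_Int trans_Int)

lemma j_middle:
  assumes "compatible \<theta>" and "i \<in> {1..n+1}" and "x \<in> C" and "z \<in> C" and "(y, y') \<in> \<theta>"
  shows "(j i x y z, j i x y' z) \<in> \<theta>"
  using assms by (blast intro: compatible_j compatible_refl)

lemma j_switch:
  assumes \<theta>: "compatible \<theta>" and i: "i \<in> {1..n}" and "x \<in> C" and "z \<in> C"
    and y: "(y, if odd i then z else x) \<in> \<theta>"
  shows "(j i x y z, j (Suc i) x y z) \<in> \<theta>"
proof -
  let ?w = "if odd i then z else x"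
  have i': "i \<in> {1..n+1}" "Suc i \<in> {1..n+1}" using i by auto
  have "j i x ?w z = j (Suc i) x ?w z"
    using i \<open>x \<in> C\<close> \<open>z \<in> C\<close> by (simp add: j_odd j_even)
  moreover have "(j i x y z, j i x ?w z) \<in> \<theta>"
    using j_middle[OF \<theta> i'(1) \<open>x \<in> C\<close> \<open>z \<in> C\<close> y] .
  moreover have "(j (Suc i) x ?w z, j (Suc i) x y z) \<in> \<theta>"
    using j_middle[OF \<theta> i'(2) \<open>x \<in> C\<close> \<open>z \<in> C\<close> compatible_sym[OF \<theta> y]] .
  ultimately show ?thesis using compatible_trans[OF \<theta>] by metis
qed

lemma j_in_class:
  assumes \<alpha>: "compatible \<alpha>" and i: "i \<in> {1..n+1}" and zx: "(z, x) \<in> \<alpha>" and y: "y \<in> C"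
  shows "(j i x y z, x) \<in> \<alpha>"
proof -
  have x: "x \<in> C" using compatible_field[OF \<alpha> zx] by blast
  show ?thesis
    using compatible_j[OF \<alpha> i compatible_refl[OF \<alpha> x] compatible_refl[OF \<alpha> y] zx] j_xyx[OF i x y]
    by simp
qed

lemma j_column:
  assumes "compatible \<alpha>" and "i \<in> {1..n+1}" and "i' \<in> {1..n+1}" and "(z, x) \<in> \<alpha>"
    and "y \<in> C" and "y' \<in> C"
  shows "(j i x y z, j i' x y' z) \<in> \<alpha>"
  using assms j_in_class by (metis compatible_sym compatible_trans)

lemma j_column_step:
  assumes "compatible \<alpha>" and "compatible \<theta>" and "i \<in> {1..n+1}" and "(z, x) \<in> \<alpha>"
    and "(y, y') \<in> \<theta>"
  shows "(j i x y z, j i x y' z) \<in> \<alpha> \<inter> \<theta>"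
  using assms j_column j_middle compatible_field by (metis IntI)

lemma j_column_switch:
  assumes "compatible \<alpha>" and "compatible \<beta>" and i: "i \<in> {1..n}" and "(z, x) \<in> \<alpha>"
    and "(y, if odd i then z else x) \<in> \<beta>"
  shows "(j i x y z, j (Suc i) x y z) \<in> \<alpha> \<inter> \<beta>"
proof -
  have "i \<in> {1..n+1}" "Suc i \<in> {1..n+1}" using i by auto
  then show ?thesis
    using assms j_column j_switch compatible_field by (metis IntI)
qed

end


locale gumm_chain = gumm_terms +
  fixes \<alpha> \<beta> \<gamma> :: "'a rel" and a b c d e f :: 'a
  assumes \<alpha>: "compatible \<alpha>" and \<beta>: "compatible \<beta>" and \<gamma>: "compatible \<gamma>"
    and af: "(a, f) \<in> \<alpha>" and ab: "(a, b) \<in> \<beta>" and bc: "(b, c) \<in> \<gamma>"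
    and cd: "(c, d) \<in> \<beta>" and de: "(d, e) \<in> \<gamma>" and ef: "(e, f) \<in> \<beta>"
begin

lemma in_carrier: "a \<in> C" "b \<in> C" "c \<in> C" "d \<in> C" "e \<in> C" "f \<in> C"
  using compatible_field[OF \<beta>] ab cd ef by blast+

definition m :: 'a where "m = j 1 f c a"
definition u :: 'a where "u = j 1 e d b"
definition v :: 'a where "v = p e d c"
definition t :: 'a where "t = j 1 m u f"

lemma m_f: "(m, f) \<in> \<alpha>"
  unfolding m_def using j_in_class[OF \<alpha> _ af] in_carrier by simp

lemma m_u: "(m, u) \<in> \<beta>"
  unfolding m_def u_def
  using compatible_j[OF \<beta> _ compatible_sym[OF \<beta> ef] cd ab] by simp

lemma u_v: "(u, v) \<in> \<gamma>"
proof -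
  have "(u, j 1 d d c) \<in> \<gamma>"
    unfolding u_def
    using compatible_j[OF \<gamma> _ compatible_sym[OF \<gamma> de] compatible_refl[OF \<gamma>] bc] in_carrier by simp
  moreover have "(p d d c, v) \<in> \<gamma>"
    unfolding v_def using compatible_p[OF \<gamma> de compatible_refl[OF \<gamma>] compatible_refl[OF \<gamma>]]
    in_carrier by simp
  ultimately show ?thesis
    using p_xxz in_carrier compatible_trans[OF \<gamma>] by metis
qed

lemma v_f: "(v, f) \<in> \<beta>"
  unfolding v_def
  using compatible_p[OF \<beta> ef compatible_refl[OF \<beta> in_carrier(4)] cd] p_xzz in_carrier by simp

lemma m_t: "(m, t) \<in> \<alpha> \<inter> (\<gamma> O \<beta>)"
proof -
  have C: "m \<in> C" "u \<in> C" "v \<in> C"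
    using compatible_field[OF \<alpha> m_f] compatible_field[OF \<beta> m_u] compatible_field[OF \<beta> v_f] by auto
  have "(p m v v, p m u v) \<in> \<gamma>"
    using compatible_p[OF \<gamma> _ compatible_sym[OF \<gamma> u_v]] compatible_refl[OF \<gamma>] C by blast
  then have "(m, p m u v) \<in> \<gamma>"
    using p_xzz C by simp
  moreover have "(p m u v, j 1 m u f) \<in> \<beta>"
  proof -
    have "(p m u v, p m m f) \<in> \<beta>"
      using compatible_p[OF \<beta> _ compatible_sym[OF \<beta> m_u] v_f] compatible_refl[OF \<beta>] C by blast
    moreover have "(j 1 m m f, j 1 m u f) \<in> \<beta>"
      using j_middle[OF \<beta> _ _ _ m_u] C in_carrier by simp
    ultimately show ?thesis
      using p_xxz C in_carrier compatible_trans[OF \<beta>] by metis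
  qed
  moreover have "(m, t) \<in> \<alpha>"
    unfolding t_def
    using j_in_class[OF \<alpha> _ compatible_sym[OF \<alpha> m_f] C(2)] compatible_sym[OF \<alpha>] by simp
  ultimately show ?thesis
    unfolding t_def by blast
qed

definition left_stop :: "nat \<Rightarrow> 'a" where
  "left_stop i = j i f (if odd i then b else e) a"

definition right_stop :: "nat \<Rightarrow> 'a" where
  "right_stop i = j i m (if odd i then u else v) f"

lemma left_start:
  assumes "1 \<le> n"
  shows "(a, left_stop n) \<in> \<alpha> \<inter> \<beta>"
proof -
  let ?w = "if odd n then b else e"
  have "(left_stop n, j (Suc n) f ?w a) \<in> \<alpha> \<inter> \<beta>"
    unfolding left_stop_def
    using j_column_switch[OF \<alpha> \<beta> _ af] assms ab ef compatible_sym[OF \<beta>] by simp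
  moreover have "j (Suc n) f ?w a = a"
    using j_last in_carrier by simp
  ultimately show ?thesis
    using compatible_sym[OF compatible_Int[OF \<alpha> \<beta>]] by metis
qed

lemma left_segment:
  assumes i: "i \<in> {1..n}"
  shows "(left_stop (Suc i), left_stop i) \<in> (\<alpha> \<inter> \<gamma>) O (\<alpha> \<inter> \<beta>) O (\<alpha> \<inter> \<gamma>) O (\<alpha> \<inter> \<beta>)"
proof -
  define w w' where "w = (if odd (Suc i) then b else e)" and "w' = (if odd i then b else e)"
  obtain y\<^sub>1 y\<^sub>2 where "(w, y\<^sub>1) \<in> \<gamma>" "(y\<^sub>1, y\<^sub>2) \<in> \<beta>" "(y\<^sub>2, w') \<in> \<gamma>"
  proof (cases "odd i")
    case True
    then show thesis
      using that[of d c] de cd bc compatible_sym[OF \<gamma>] compatible_sym[OF \<beta>]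
      unfolding w_def w'_def by simp
  next
    case False
    then show thesis using that[of c d] bc cd de unfolding w_def w'_def by simp
  qed
  moreover have i': "Suc i \<in> {1..n+1}" using i by simp
  ultimately have "(j (Suc i) f w a, j (Suc i) f w' a) \<in> (\<alpha> \<inter> \<gamma>) O (\<alpha> \<inter> \<beta>) O (\<alpha> \<inter> \<gamma>)"
    using j_column_step[OF \<alpha> \<gamma> i' af] j_column_step[OF \<alpha> \<beta> i' af] by (meson relcompI)
  moreover have "(j i f w' a, j (Suc i) f w' a) \<in> \<alpha> \<inter> \<beta>"
    using j_column_switch[OF \<alpha> \<beta> i af] ab ef compatible_sym[OF \<beta>] unfolding w'_def by simp
  then have "(j (Suc i) f w' a, j i f w' a) \<in> \<alpha> \<inter> \<beta>"
    using compatible_sym[OF compatible_Int[OF \<alpha> \<beta>]] by blast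
  ultimately show ?thesis
    unfolding left_stop_def w_def w'_def by blast
qed

lemma left_path:
  assumes "1 \<le> i" and "i \<le> n"
  shows "(a, left_stop i) \<in> (\<alpha> \<inter> \<beta>) O ((\<alpha> \<inter> \<gamma>) O (\<alpha> \<inter> \<beta>)) ^^ (2 * (n - i))"
  using assms(2)
proof (induction rule: inc_induct)
  case base
  show ?case using left_start assms by simp
next
  case (step k)
  let ?R = "(\<alpha> \<inter> \<gamma>) O (\<alpha> \<inter> \<beta>)"
  have "(left_stop (Suc k), left_stop k) \<in> ?R O ?R"
    using left_segment[of k] step.hyps assms(1) by (simp add: O_assoc)
  then have "(a, left_stop k) \<in> ((\<alpha> \<inter> \<beta>) O ?R ^^ (2 * (n - Suc k))) O (?R O ?R)"
    using step.IH by blast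
  moreover have "2 * (n - k) = Suc (Suc (2 * (n - Suc k)))" using step.hyps by simp
  ultimately show ?case by (simp add: O_assoc)
qed

lemma left_chain:
  assumes "1 \<le> n"
  shows "(a, m) \<in> alt_comp (\<alpha> \<inter> \<beta>) (\<alpha> \<inter> \<gamma>) (4 * n - 1)"
proof -
  have "(left_stop 1, m) \<in> \<alpha> \<inter> \<gamma>"
    unfolding left_stop_def m_def using j_column_step[OF \<alpha> \<gamma> _ af bc] by simp
  moreover have "(m, m) \<in> \<alpha> \<inter> \<beta>" \<comment> \<open>a trivial last factor pads the path to odd length \<open>4n - 1\<close>\<close>
    using compatible_refl[OF compatible_Int[OF \<alpha> \<beta>]] compatible_field[OF \<alpha> m_f] by blast
  ultimately have "(left_stop 1, m) \<in> (\<alpha> \<inter> \<gamma>) O (\<alpha> \<inter> \<beta>)" by blast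
  then have "(a, m) \<in> ((\<alpha> \<inter> \<beta>) O ((\<alpha> \<inter> \<gamma>) O (\<alpha> \<inter> \<beta>)) ^^ (2 * (n - 1)))
      O ((\<alpha> \<inter> \<gamma>) O (\<alpha> \<inter> \<beta>))"
    using left_path[of 1] assms by blast
  moreover have "4 * n - 1 = Suc (2 * Suc (2 * (n - 1)))" using assms by simp
  ultimately show ?thesis by (simp only: alt_comp_odd relpow.simps O_assoc)
qed

lemma right_segment:
  assumes i: "i \<in> {1..n}"
  shows "(right_stop i, right_stop (Suc i)) \<in> (\<alpha> \<inter> \<gamma>) O (\<alpha> \<inter> \<beta>)"
proof -
  define w w' where "w = (if odd i then u else v)" and "w' = (if odd i then v else u)"
  have fm: "(f, m) \<in> \<alpha>" using compatible_sym[OF \<alpha> m_f] .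
  have "(w, w') \<in> \<gamma>"
    unfolding w_def w'_def using u_v compatible_sym[OF \<gamma>] by simp
  then have "(j i m w f, j i m w' f) \<in> \<alpha> \<inter> \<gamma>"
    using j_column_step[OF \<alpha> \<gamma> _ fm] i by simp
  moreover have "(j i m w' f, j (Suc i) m w' f) \<in> \<alpha> \<inter> \<beta>"
    using j_column_switch[OF \<alpha> \<beta> i fm] v_f m_u compatible_sym[OF \<beta>] unfolding w'_def by simp
  ultimately show ?thesis
    unfolding right_stop_def w_def w'_def by auto
qed

lemma right_chain: "(t, f) \<in> alt_comp (\<alpha> \<inter> \<gamma>) (\<alpha> \<inter> \<beta>) (2 * n)"
proof -
  have "(t, right_stop (Suc k)) \<in> ((\<alpha> \<inter> \<gamma>) O (\<alpha> \<inter> \<beta>)) ^^ k" if "k \<le> n" for k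
    using that
  proof (induction k)
    case 0
    show ?case by (simp add: right_stop_def t_def)
  next
    case (Suc k)
    then have "(right_stop (Suc k), right_stop (Suc (Suc k))) \<in> (\<alpha> \<inter> \<gamma>) O (\<alpha> \<inter> \<beta>)"
      using right_segment[of "Suc k"] by simp
    with Suc.IH Suc.prems show ?case by (meson Suc_leD relpow_Suc_I)
  qed
  moreover have "right_stop (Suc n) = f"
    unfolding right_stop_def
    using j_last in_carrier compatible_field[OF \<alpha> m_f] compatible_field[OF \<beta> m_u]
      compatible_field[OF \<beta> v_f] by simp
  ultimately show ?thesis by (fastforce simp: alt_comp_even)
qed

end

theorem (in gumm_terms) Int_relcomp5_subset:
  assumes "1 \<le> n" and \<alpha>: "compatible \<alpha>" and \<beta>: "compatible \<beta>" and \<gamma>: "compatible \<gamma>"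
  shows "\<alpha> \<inter> (\<beta> O \<gamma> O \<beta> O \<gamma> O \<beta>)
    \<subseteq> alt_comp (\<alpha> \<inter> \<beta>) (\<alpha> \<inter> \<gamma>) (4 * n - 1) O (\<alpha> \<inter> (\<gamma> O \<beta>))
        O alt_comp (\<alpha> \<inter> \<gamma>) (\<alpha> \<inter> \<beta>) (2 * n)"
proof clarify
  fix a f b c d e
  assume "(a, f) \<in> \<alpha>" "(a, b) \<in> \<beta>" "(b, c) \<in> \<gamma>" "(c, d) \<in> \<beta>" "(d, e) \<in> \<gamma>" "(e, f) \<in> \<beta>"
  then interpret gumm_chain C p j n \<alpha> \<beta> \<gamma> a b c d e f
    using \<alpha> \<beta> \<gamma> by unfold_locales
  show "(a, f) \<in> alt_comp (\<alpha> \<inter> \<beta>) (\<alpha> \<inter> \<gamma>) (4 * n - 1) O (\<alpha> \<inter> (\<gamma> O \<beta>))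
        O alt_comp (\<alpha> \<inter> \<gamma>) (\<alpha> \<inter> \<beta>) (2 * n)"
    using left_chain[OF assms(1)] m_t right_chain by blast
qed

corollary (in gumm_terms) Int_relcomp5_Int_subset:
  assumes "1 \<le> n" and \<alpha>: "compatible \<alpha>" and \<beta>: "compatible \<beta>" and \<gamma>: "compatible \<gamma>"
  shows "\<alpha> \<inter> (\<beta> O (\<alpha> \<inter> \<gamma>) O \<beta> O (\<alpha> \<inter> \<gamma>) O \<beta>) \<subseteq> alt_comp (\<alpha> \<inter> \<beta>) (\<alpha> \<inter> \<gamma>) (6 * n + 1)"
proof -
  let ?R = "(\<alpha> \<inter> \<gamma>) O (\<alpha> \<inter> \<beta>)"
  have lengths: "4 * n - 1 = Suc (2 * (2 * n - 1))" "6 * n + 1 = Suc (2 * (3 * n))"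
    using assms(1) by simp_all
  have Int_absorb: "\<alpha> \<inter> (\<alpha> \<inter> \<gamma>) = \<alpha> \<inter> \<gamma>" by blast
  have "\<alpha> \<inter> (\<beta> O (\<alpha> \<inter> \<gamma>) O \<beta> O (\<alpha> \<inter> \<gamma>) O \<beta>)
      \<subseteq> (\<alpha> \<inter> \<beta>) O ?R ^^ (2 * n - 1) O (\<alpha> \<inter> ((\<alpha> \<inter> \<gamma>) O \<beta>)) O ?R ^^ n"
    using Int_relcomp5_subset[OF assms(1) \<alpha> \<beta> compatible_Int[OF \<alpha> \<gamma>]]
    by (simp only: Int_absorb lengths alt_comp_odd alt_comp_even O_assoc)
  also have "\<dots> \<subseteq> (\<alpha> \<inter> \<beta>) O ?R ^^ (2 * n - 1) O ?R O ?R ^^ n"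
  proof -
    have "sym \<alpha>" "trans \<alpha>" using \<alpha> unfolding compatible_def equiv_def by blast+
    then have "\<alpha> \<inter> ((\<alpha> \<inter> \<gamma>) O \<beta>) \<subseteq> ?R" by (rule Int_relcomp_absorb)
    then show ?thesis by (intro relcomp_mono order_refl)
  qed
  also have "\<dots> = (\<alpha> \<inter> \<beta>) O ?R ^^ (3 * n)"
  proof -
    have "3 * n = Suc (2 * n - 1) + n" using assms(1) by simp
    then show ?thesis by (simp only: relpow_add relpow.simps O_assoc)
  qed
  also have "\<dots> = alt_comp (\<alpha> \<inter> \<beta>) (\<alpha> \<inter> \<gamma>) (6 * n + 1)"
    by (simp only: lengths alt_comp_odd)
  finally show ?thesis .
qed

lemma eval_congruence:
  assumes "congruence ar A \<theta>" and "wf_trm ar s" and "\<forall>i \<in> vars_trm s. (\<rho> i, \<rho>' i) \<in> \<theta>"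
  shows "(eval A \<rho> s, eval A \<rho>' s) \<in> \<theta>"
  using assms(2,3)
proof (induction s)
  case (Var i)
  then show ?case by simp
next
  case (Fun g ss)
  have args: "\<forall>s \<in> set ss. (eval A \<rho> s, eval A \<rho>' s) \<in> \<theta>" using Fun by auto
  have "\<theta> \<subseteq> carrier A \<times> carrier A"
    using assms(1) unfolding congruence_def equiv_def by blast
  with args have "set (map (eval A \<rho>) ss) \<subseteq> carrier A" "set (map (eval A \<rho>') ss) \<subseteq> carrier A"
    by auto
  moreover have "list_all2 (\<lambda>x y. (x, y) \<in> \<theta>) (map (eval A \<rho>) ss) (map (eval A \<rho>') ss)"
    using args by (simp add: list_all2_map1 list_all2_map2 list_all2_same)
  ultimately show ?case
    using assms(1) Fun.prems(1) unfolding congruence_def by simp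
qed

lemma has_gumm_termsE:
  assumes "has_gumm_terms ar V n"
  obtains p j where
    "\<And>A. A \<in> V \<Longrightarrow> gumm_terms (carrier A) (tern A p) (\<lambda>i. tern A (j i)) n"
    "\<And>A \<theta>. \<lbrakk>A \<in> V; congruence ar A \<theta>\<rbrakk>
      \<Longrightarrow> gumm_terms.compatible (carrier A) (tern A p) (\<lambda>i. tern A (j i)) n \<theta>"
proof -
  obtain p j where p: "ternary_trm ar p" and j: "\<forall>i \<in> {1..n+1}. ternary_trm ar (j i)"
    and ids: "\<forall>A\<in>V. \<forall>x\<in>carrier A. \<forall>y\<in>carrier A. \<forall>z\<in>carrier A.
          (\<forall>i\<in>{1..n+1}. tern A (j i) x y x = x) \<and>
          tern A p x z z = x \<and>
          tern A p x x z = tern A (j 1) x x z \<and>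
          (\<forall>i\<in>{1..n}. odd i \<longrightarrow> tern A (j i) x z z = tern A (j (i+1)) x z z) \<and>
          (\<forall>i\<in>{1..n}. even i \<longrightarrow> tern A (j i) x x z = tern A (j (i+1)) x x z) \<and>
          tern A (j (n+1)) x y z = z"
    using assms unfolding has_gumm_terms_def by blast
  have tern_congruence: "(tern A s x y z, tern A s x' y' z') \<in> \<theta>"
    if "congruence ar A \<theta>" "ternary_trm ar s" "(x, x') \<in> \<theta>" "(y, y') \<in> \<theta>" "(z, z') \<in> \<theta>"
    for A \<theta> s x x' y y' z z'
    unfolding tern_def
    by (rule eval_congruence) (use that in \<open>auto simp: ternary_trm_def\<close>)
  have gumm: "gumm_terms (carrier A) (tern A p) (\<lambda>i. tern A (j i)) n" if "A \<in> V" for A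
    by unfold_locales (use ids that in auto)
  show ?thesis
  proof (rule that[OF gumm])
    show "gumm_terms.compatible (carrier A) (tern A p) (\<lambda>i. tern A (j i)) n \<theta>"
      if "A \<in> V" and "congruence ar A \<theta>" for A \<theta>
    proof -
      have "equiv (carrier A) \<theta>" using that(2) unfolding congruence_def by blast
      then show ?thesis
        unfolding gumm_terms.compatible_def[OF gumm[OF that(1)]]
        using tern_congruence[OF that(2)] p j by blast
    qed
  qed
qed

theorem mainTheorem13:
  fixes ar :: "'f \<Rightarrow> nat" and V :: "('a, 'f) alg set" and n :: nat
  assumes "n \<ge> 1"
    and "variety ar V"
    and "has_gumm_terms ar V n"
  shows "(\<forall>A\<in>V. \<forall>\<alpha> \<beta> \<gamma>. congruence ar A \<alpha> \<longrightarrow> congruence ar A \<beta> \<longrightarrow> congruence ar A \<gamma> \<longrightarrow>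
           \<alpha> \<inter> (\<beta> O \<gamma> O \<beta> O \<gamma> O \<beta>)
             \<subseteq> alt_comp (\<alpha> \<inter> \<beta>) (\<alpha> \<inter> \<gamma>) (4*n - 1) O (\<alpha> \<inter> (\<gamma> O \<beta>))
                 O alt_comp (\<alpha> \<inter> \<gamma>) (\<alpha> \<inter> \<beta>) (2*n))
      \<and> (\<forall>A\<in>V. \<forall>\<alpha> \<beta> \<gamma>. congruence ar A \<alpha> \<longrightarrow> congruence ar A \<beta> \<longrightarrow> congruence ar A \<gamma> \<longrightarrow>
           \<alpha> \<inter> (\<beta> O (\<alpha> \<inter> \<gamma>) O \<beta> O (\<alpha> \<inter> \<gamma>) O \<beta>)
             \<subseteq> alt_comp (\<alpha> \<inter> \<beta>) (\<alpha> \<inter> \<gamma>) (6*n + 1))"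
proof -
  obtain p j where
    gumm: "\<And>A. A \<in> V \<Longrightarrow> gumm_terms (carrier A) (tern A p) (\<lambda>i. tern A (j i)) n" and
    compatible: "\<And>A \<theta>. \<lbrakk>A \<in> V; congruence ar A \<theta>\<rbrakk>
      \<Longrightarrow> gumm_terms.compatible (carrier A) (tern A p) (\<lambda>i. tern A (j i)) n \<theta>"
    using has_gumm_termsE[OF assms(3)] by metis
  show ?thesis
    by (intro conjI ballI allI impI;
        rule gumm_terms.Int_relcomp5_subset[OF gumm assms(1) compatible compatible compatible]
          gumm_terms.Int_relcomp5_Int_subset[OF gumm assms(1) compatible compatible compatible];
        assumption)
qed

end
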